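(* Let $(\{0,1\}^{\mathbb N},\mathbb B_\Pi,m,\sigma)$ be an ergodic Markov shift over two symbols, $X$ a lexicographic-like random variable, $d\in\mathbb N$, $O=\bigcup_{n=0}^\infty\sigma^{-n}(\{\overline0\})$ with $\overline0=(0,0,\dots)$, and $\widetilde{\mathcal P}^X(d)=\{P\setminus O\mid P\in\mathcal P^X(d)\}\cup\{O\}$. If $P_i,P_j\in\widetilde{\mathcal P}^X(d)$ and $P_i\subseteq C_{a_0}$ for some $a_0\in\{0,1\}$, then either $P_i\cap\sigma^{-1}(P_j)=C_{a_0}\cap\sigma^{-1}(P_j)$ or $m(P_i\cap\sigma^{-1}(P_j))=0$.
   Context: Markov shift over $\{0,1\}$: given a $2\times2$ stochastic matrix $Q=(q_{ij})$ and a stationary probability vector $p$ with positive entries, the system on one-sided sequences $s=(s_0,s_1,\dots)\in\{0,1\}^{\mathbb N}$ with $\sigma$-algebra $\mathbb B_\Pi$ generated by cylinders $C_{a_0\dots a_{n-1}}=\{s:s_i=a_i,i<n\}$, shift $(\sigma s)_j=s_{j+1}$ and $m(C_{a_0\dots a_{n-1}})=p_{a_0}q_{a_0a_1}\cdots q_{a_{n-2}a_{n-1}}$; ergodic means every $\sigma$-invariant set has measure $0$ or $1$. Lexicographic order: $r\prec s$ iff $r_0<s_0$ or there is $k\in\mathbb N$ with $r_i=s_i$ for $i<k$ and $r_k<s_k$. $X$ is lexicographic-like if it is injective on a set of full $m$-measure and for all $s$ and $j,n\in\mathbb N_0$: $X(\sigma^j s)\le X(\sigma^n s)$ iff $\sigma^j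 s\preceq\sigma^n s$. Ordinal pattern: $(x_0,\dots,x_d)$ has pattern $\pi=(r_0,\dots,r_d)\in\Pi_d$ (permutations of $\{0,\dots,d\}$) if $x_{r_0}\ge\dots\ge x_{r_d}$ and $r_{l-1}>r_l$ whenever $x_{r_{l-1}}=x_{r_l}$. The ordinal partition $\mathcal P^X(d)$ consists of the sets $P_\pi=\{s:(X(\sigma^d s),\dots,X(\sigma s),X(s))\text{ has ordinal pattern }\pi\}$, $\pi\in\Pi_d$. *)

theory Defs
  imports "HOL-Analysis.Analysis"
begin

definition seqspace :: "(nat \<Rightarrow> nat) set" where
  "seqspace = {s. \<forall>i. s i \<in> {0, 1}}"

definition shift :: "(nat \<Rightarrow> nat) \<Rightarrow> (nat \<Rightarrow> nat)" where
  "shift s = (\<lambda>j. s (Suc j))"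

definition cyl :: "nat list \<Rightarrow> (nat \<Rightarrow> nat) set" where
  "cyl as = {s \<in> seqspace. \<forall>i < length as. s i = as ! i}"

definition cylinders :: "(nat \<Rightarrow> nat) set set" where
  "cylinders = {cyl as | as. set as \<subseteq> {0, 1}}"

definition markov_cyl :: "(nat \<Rightarrow> real) \<Rightarrow> (nat \<Rightarrow> nat \<Rightarrow> real) \<Rightarrow> nat list \<Rightarrow> real" where
  "markov_cyl p q as = p (as ! 0) * (\<Prod>i < length as - 1. q (as ! i) (as ! Suc i))"

definition markov_shift ::
  "(nat \<Rightarrow> nat \<Rightarrow> real) \<Rightarrow> (nat \<Rightarrow> real) \<Rightarrow> (nat \<Rightarrow> nat) measure \<Rightarrow> bool" where
  "markov_shift q p M \<longleftrightarrow>
     (\<forall>i \<in> {0, 1}. \<forall>j \<in> {0, 1}. q i j \<ge> 0) \<and>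
     (\<forall>i \<in> {0, 1}. q i 0 + q i 1 = 1) \<and>
     p 0 > 0 \<and> p 1 > 0 \<and> p 0 + p 1 = 1 \<and>
     (\<forall>j \<in> {0, 1}. p 0 * q 0 j + p 1 * q 1 j = p j) \<and>
     space M = seqspace \<and>
     sets M = sigma_sets seqspace cylinders \<and>
     (\<forall>as. as \<noteq> [] \<and> set as \<subseteq> {0, 1} \<longrightarrow>
        emeasure M (cyl as) = ennreal (markov_cyl p q as))"

definition ergodic_shift :: "(nat \<Rightarrow> nat) measure \<Rightarrow> bool" where
  "ergodic_shift M \<longleftrightarrow>
     (\<forall>A \<in> sets M. shift -` A \<inter> space M = A \<longrightarrow> emeasure M A = 0 \<or> emeasure M A = 1)"

definition lex_less :: "(nat \<Rightarrow> nat) \<Rightarrow> (nat \<Rightarrow> nat) \<Rightarrow> bool" where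
  "lex_less r s \<longleftrightarrow> r 0 < s 0 \<or> (\<exists>k. (\<forall>i < k. r i = s i) \<and> r k < s k)"

definition lex_le :: "(nat \<Rightarrow> nat) \<Rightarrow> (nat \<Rightarrow> nat) \<Rightarrow> bool" where
  "lex_le r s \<longleftrightarrow> lex_less r s \<or> r = s"

definition lexicographic_like :: "(nat \<Rightarrow> nat) measure \<Rightarrow> ((nat \<Rightarrow> nat) \<Rightarrow> real) \<Rightarrow> bool" where
  "lexicographic_like M X \<longleftrightarrow>
     (\<exists>A \<in> sets M. emeasure M (space M - A) = 0 \<and> inj_on X A) \<and>
     (\<forall>s \<in> space M. \<forall>j n. X ((shift ^^ j) s) \<le> X ((shift ^^ n) s) \<longleftrightarrow>
                               lex_le ((shift ^^ j) s) ((shift ^^ n) s))"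

definition perms :: "nat \<Rightarrow> nat list set" where
  "perms d = {r. distinct r \<and> set r = {0..d}}"

definition has_pattern :: "(nat \<Rightarrow> real) \<Rightarrow> nat \<Rightarrow> nat list \<Rightarrow> bool" where
  "has_pattern x d r \<longleftrightarrow>
     (\<forall>l. 1 \<le> l \<and> l \<le> d \<longrightarrow>
        x (r ! (l - 1)) \<ge> x (r ! l) \<and>
        (x (r ! (l - 1)) = x (r ! l) \<longrightarrow> r ! (l - 1) > r ! l))"

text \<open>P_pi: the vector (X(sigma^d s), ..., X(sigma s), X(s)) has pattern pi,
  i.e. its i-th entry is X(sigma^(d-i) s).\<close>
definition pattern_set :: "((nat \<Rightarrow> nat) \<Rightarrow> real) \<Rightarrow> nat \<Rightarrow> nat list \<Rightarrow> (nat \<Rightarrow> nat) set" where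
  "pattern_set X d r = {s \<in> seqspace. has_pattern (\<lambda>i. X ((shift ^^ (d - i)) s)) d r}"

definition ordinal_partition :: "((nat \<Rightarrow> nat) \<Rightarrow> real) \<Rightarrow> nat \<Rightarrow> (nat \<Rightarrow> nat) set set" where
  "ordinal_partition X d = pattern_set X d ` perms d"

definition zero_orbit :: "(nat \<Rightarrow> nat) set" where
  "zero_orbit = (\<Union>n. (shift ^^ n) -` {(\<lambda>_. 0)} \<inter> seqspace)"

definition mod_partition :: "((nat \<Rightarrow> nat) \<Rightarrow> real) \<Rightarrow> nat \<Rightarrow> (nat \<Rightarrow> nat) set set" where
  "mod_partition X d = (\<lambda>P. P - zero_orbit) ` ordinal_partition X d \<union> {zero_orbit}"

end

theory Submission
  imports Defs
begin

(* Away from the zero orbit O the ordinal pattern of s (positions 0..d of the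
   orbit of s, ranked lexicographically because X is lexicographic-like) is determined by
   the first symbol s 0 together with the ordinal pattern of shift s (positions 1..d+1):
     - comparing positions k and k+1 (1 <= k <= d) recovers the digit s k, since a 0/1
       sequence that is not eventually zero is lexicographically below its shift exactly
       when it starts with 0;
     - comparing position 0 with position k amounts to comparing s 0 with s k and, on a
       tie, positions 1 and k+1;
     - comparisons between positions >= 1 are comparisons in the orbit of shift s.
   Hence Pi \<inter> shift^-1 Pj is either empty (measure 0) or all of C_a0 \<inter> shift^-1 Pj:
   Pi = O is impossible since O meets both one-symbol cylinders, and a nonempty
   intersection forces Pj \<noteq> O because O is invariant under the shift in both
   directions; so Pi = P_r - O and Pj = P_r' - O, and the observation above applies. *)

section \<open>The lexicographic order\<close>

lemma lex_less_iff: "lex_less v w \<longleftrightarrow> (\<exists>k. (\<forall>i<k. v i = w i) \<and> v k < w k)"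
  unfolding lex_less_def by (metis less_nat_zero_code)

lemma lex_less_asym: "lex_less v w \<Longrightarrow> \<not> lex_less w v"
  unfolding lex_less_iff by (metis less_asym linorder_neqE_nat)

lemma lex_less_irrefl: "\<not> lex_less v v"
  using lex_less_asym by blast

text \<open>The lexicographic order is total: compare at the first index where two sequences differ.\<close>
lemma lex_less_total:
  assumes "v \<noteq> w"
  shows "lex_less v w \<or> lex_less w v"
proof -
  have ex: "\<exists>i. v i \<noteq> w i" using assms by auto
  define k where "k = (LEAST i. v i \<noteq> w i)"
  have "v k \<noteq> w k" unfolding k_def using LeastI_ex[OF ex] .
  moreover have "\<forall>i<k. v i = w i" unfolding k_def using not_less_Least by blast
  ultimately show ?thesis unfolding lex_less_iff by (metis linorder_neqE_nat)
qed

lemma not_lex_le_iff: "\<not> lex_le w v \<longleftrightarrow> lex_less v w"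
  unfolding lex_le_def using lex_less_total lex_less_asym lex_less_irrefl by metis

lemma lex_less_shift_iff:
  "lex_less v w \<longleftrightarrow> v 0 < w 0 \<or> (v 0 = w 0 \<and> lex_less (shift v) (shift w))"
proof
  assume "lex_less v w"
  then obtain k where k: "\<forall>i<k. v i = w i" "v k < w k" unfolding lex_less_iff by blast
  show "v 0 < w 0 \<or> (v 0 = w 0 \<and> lex_less (shift v) (shift w))"
  proof (cases k)
    case 0
    then show ?thesis using k by simp
  next
    case (Suc k')
    then show ?thesis using k unfolding lex_less_iff shift_def by auto
  qed
next
  assume "v 0 < w 0 \<or> (v 0 = w 0 \<and> lex_less (shift v) (shift w))"
  then show "lex_less v w"
  proof
    assume "v 0 < w 0"
    then show ?thesis unfolding lex_less_def by simp
  next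
    assume head: "v 0 = w 0 \<and> lex_less (shift v) (shift w)"
    then obtain k where k: "\<forall>i<k. v (Suc i) = w (Suc i)" "v (Suc k) < w (Suc k)"
      unfolding lex_less_iff shift_def by auto
    have "\<forall>i<Suc k. v i = w i" using k(1) head by (auto simp: less_Suc_eq_0_disj)
    then show ?thesis unfolding lex_less_iff using k(2) by blast
  qed
qed

lemma eq_shift_iff: "v = w \<longleftrightarrow> v 0 = w 0 \<and> shift v = shift w"
proof
  assume head: "v 0 = w 0 \<and> shift v = shift w"
  show "v = w"
  proof
    fix j
    show "v j = w j"
    proof (cases j)
      case 0
      then show ?thesis using head by simp
    next
      case (Suc i)
      then show ?thesis using fun_cong[OF conjunct2[OF head], of i] by (simp add: shift_def)
    qed
  qed
qed simp

section \<open>Sequences over the symbols 0 and 1\<close>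

lemma shift_pow: "(shift ^^ n) s = (\<lambda>j. s (j + n))"
  by (induction n) (auto simp: shift_def)

lemma shift_pow_shift: "(shift ^^ n) (shift s) = (shift ^^ Suc n) s"
  by (simp only: funpow_Suc_right comp_apply)

lemma seqspace_symbol: "s \<in> seqspace \<Longrightarrow> s i = 0 \<or> s i = 1"
  unfolding seqspace_def by auto

lemma shift_seqspace: "s \<in> seqspace \<Longrightarrow> shift s \<in> seqspace"
  unfolding seqspace_def shift_def by auto

lemma shift_lex_le_of_head_one:
  assumes "v \<in> seqspace" "v 0 = 1"
  shows "lex_le (shift v) v"
proof (cases "\<forall>i. v i = 1")
  case True
  then show ?thesis unfolding lex_le_def shift_def by auto
next
  case False
  then have ex: "\<exists>i. v i \<noteq> 1" by auto
  define m where "m = (LEAST i. v i \<noteq> 1)"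
  have "v m \<noteq> 1" unfolding m_def using LeastI_ex[OF ex] .
  then have vm: "v m = 0" using seqspace_symbol[OF assms(1), of m] by simp
  have ones: "\<forall>i<m. v i = 1" unfolding m_def using not_less_Least by blast
  obtain m' where m: "m = Suc m'" using vm assms(2) by (cases m) auto
  have "lex_less (shift v) v" unfolding lex_less_iff shift_def
    using ones vm m by (intro exI[of _ m']) auto
  then show ?thesis unfolding lex_le_def ..
qed

lemma lex_less_shift_of_head_zero:
  assumes "v \<in> seqspace" "v 0 = 0" "v \<noteq> (\<lambda>_. 0)"
  shows "lex_less v (shift v)"
proof -
  have ex: "\<exists>i. v i \<noteq> 0" using assms(3) by auto
  define m where "m = (LEAST i. v i \<noteq> 0)"
  have "v m \<noteq> 0" unfolding m_def using LeastI_ex[OF ex] .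
  then have vm: "v m = 1" using seqspace_symbol[OF assms(1), of m] by simp
  have zeros: "\<forall>i<m. v i = 0" unfolding m_def using not_less_Least by blast
  obtain m' where m: "m = Suc m'" using vm assms(2) by (cases m) auto
  show ?thesis unfolding lex_less_iff shift_def
    using zeros vm m by (intro exI[of _ m']) auto
qed

lemma shift_in_zero_orbit_iff:
  assumes "s \<in> seqspace"
  shows "shift s \<in> zero_orbit \<longleftrightarrow> s \<in> zero_orbit"
proof
  assume "shift s \<in> zero_orbit"
  then obtain n where "(shift ^^ n) (shift s) = (\<lambda>_. 0)" unfolding zero_orbit_def by auto
  then have "(shift ^^ Suc n) s = (\<lambda>_. 0)" by (simp only: shift_pow_shift)
  then show "s \<in> zero_orbit" using assms unfolding zero_orbit_def by blast
next
  assume "s \<in> zero_orbit"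
  then obtain n where "(shift ^^ n) s = (\<lambda>_. 0)" unfolding zero_orbit_def by auto
  then have "(shift ^^ n) (shift s) = (\<lambda>_. 0)"
    unfolding shift_pow_shift funpow.simps(2) comp_apply by (simp add: shift_def)
  then show "shift s \<in> zero_orbit"
    using shift_seqspace[OF assms] unfolding zero_orbit_def by blast
qed

lemma shift_pow_nonzero:
  assumes "s \<in> seqspace" "s \<notin> zero_orbit"
  shows "(shift ^^ n) s \<noteq> (\<lambda>_. 0)"
  using assms unfolding zero_orbit_def by blast

section \<open>Ranking the positions of an orbit\<close>

text \<open>This is the
  relation that an ordinal pattern of a lexicographic-like observable records.\<close>
definition orbit_before :: "(nat \<Rightarrow> nat) \<Rightarrow> nat \<Rightarrow> nat \<Rightarrow> bool" where
  "orbit_before u a b \<longleftrightarrow>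
     lex_less ((shift ^^ b) u) ((shift ^^ a) u) \<or> ((shift ^^ a) u = (shift ^^ b) u \<and> a < b)"

lemma orbit_before_irrefl: "\<not> orbit_before u a a"
  unfolding orbit_before_def using lex_less_irrefl by simp

lemma orbit_before_swap:
  assumes "a \<noteq> b"
  shows "orbit_before u b a \<longleftrightarrow> \<not> orbit_before u a b"
proof (cases "(shift ^^ a) u = (shift ^^ b) u")
  case True
  then show ?thesis using assms lex_less_irrefl unfolding orbit_before_def by auto
next
  case False
  then show ?thesis
    using lex_less_total[OF False] lex_less_asym[of "(shift ^^ a) u" "(shift ^^ b) u"]
    unfolding orbit_before_def by auto
qed

lemma orbit_before_shift: "orbit_before (shift u) a b \<longleftrightarrow> orbit_before u (Suc a) (Suc b)"
  unfolding orbit_before_def shift_pow_shift by simp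

lemma orbit_before_digit:
  assumes u: "u \<in> seqspace" and nonzero: "(shift ^^ k) u \<noteq> (\<lambda>_. 0)"
  shows "orbit_before u k (Suc k) \<longleftrightarrow> u k = 1"
proof -
  define v where "v = (shift ^^ k) u"
  have v: "v \<in> seqspace" "v 0 = u k" "(shift ^^ Suc k) u = shift v"
    using u unfolding v_def shift_pow seqspace_def shift_def by auto
  show ?thesis
  proof (cases "u k = 1")
    case True
    then show ?thesis using shift_lex_le_of_head_one[OF v(1)] v
      unfolding orbit_before_def lex_le_def v_def by auto
  next
    case False
    then have "v 0 = 0" using u v(2) unfolding seqspace_def by auto
    then have "lex_less v (shift v)"
      using lex_less_shift_of_head_zero[OF v(1)] nonzero v_def by simp
    then show ?thesis using False v lex_less_asym unfolding orbit_before_def v_def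
      by (metis less_irrefl)
  qed
qed

lemma orbit_before_zero:
  assumes "0 < k"
  shows "orbit_before u 0 k \<longleftrightarrow> u k < u 0 \<or> (u k = u 0 \<and> orbit_before (shift u) 0 k)"
proof -
  have "lex_less ((shift ^^ k) u) u \<longleftrightarrow>
        u k < u 0 \<or> (u k = u 0 \<and> lex_less ((shift ^^ k) (shift u)) (shift u))"
    by (subst lex_less_shift_iff) (simp add: shift_pow shift_def)
  moreover have "u = (shift ^^ k) u \<longleftrightarrow> u 0 = u k \<and> shift u = (shift ^^ k) (shift u)"
    by (subst eq_shift_iff) (simp add: shift_pow shift_def)
  ultimately show ?thesis using assms unfolding orbit_before_def by auto
qed

lemma orbit_before_determined:
  assumes s: "s \<in> seqspace" "shift s \<notin> zero_orbit"
    and t: "t \<in> seqspace" "shift t \<notin> zero_orbit"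
    and head: "s 0 = t 0"
    and tail: "\<And>a b. a \<le> d \<Longrightarrow> b \<le> d \<Longrightarrow> orbit_before (shift s) a b = orbit_before (shift t) a b"
    and ab: "a \<le> d" "b \<le> d"
  shows "orbit_before s a b = orbit_before t a b"
proof -
  have digits: "s (Suc i) = t (Suc i)" if "Suc i \<le> d" for i
  proof -
    have "orbit_before (shift s) i (Suc i) = orbit_before (shift t) i (Suc i)"
      using tail that by simp
    then have "(shift s i = 1) = (shift t i = 1)"
      using orbit_before_digit[OF shift_seqspace[OF s(1)] shift_pow_nonzero[OF shift_seqspace s(2)]]
        orbit_before_digit[OF shift_seqspace[OF t(1)] shift_pow_nonzero[OF shift_seqspace t(2)]]
        s(1) t(1) by simp
    then show ?thesis
      using seqspace_symbol[OF s(1), of "Suc i"] seqspace_symbol[OF t(1), of "Suc i"]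
      unfolding shift_def by auto
  qed
  have from_zero: "orbit_before s 0 k = orbit_before t 0 k" if "0 < k" "k \<le> d" for k
    using orbit_before_zero[OF that(1), of s] orbit_before_zero[OF that(1), of t]
      tail[of 0 k] digits[of "k - 1"] head that by simp
  show ?thesis
  proof (cases a)
    case 0
    then show ?thesis using from_zero[of b] ab orbit_before_irrefl by (cases b) auto
  next
    case (Suc i)
    then show ?thesis
      using from_zero[of a] orbit_before_swap[of 0 a] tail[of i "b - 1"] orbit_before_shift ab
      by (cases b) auto
  qed
qed

section \<open>Ordinal patterns as rankings\<close>

definition pattern_precedes :: "(nat \<Rightarrow> real) \<Rightarrow> nat \<Rightarrow> nat \<Rightarrow> bool" where
  "pattern_precedes x i j \<longleftrightarrow> x j < x i \<or> (x i = x j \<and> j < i)"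

lemma has_pattern_iff_precedes:
  "has_pattern x d r \<longleftrightarrow> (\<forall>l. 1 \<le> l \<and> l \<le> d \<longrightarrow> pattern_precedes x (r ! (l - 1)) (r ! l))"
  unfolding has_pattern_def pattern_precedes_def by auto

lemma perms_length: "r \<in> perms d \<Longrightarrow> length r = Suc d"
  unfolding perms_def using distinct_card by fastforce

lemma perms_nth_le:
  assumes "r \<in> perms d" "l \<le> d"
  shows "r ! l \<le> d"
proof -
  have "r ! l \<in> set r" using perms_length[OF assms(1)] assms(2) by simp
  then show ?thesis using assms(1) unfolding perms_def by auto
qed

lemma pattern_precedes_nth:
  assumes x: "has_pattern x d r" and "a < b" "b \<le> d"
  shows "pattern_precedes x (r ! a) (r ! b)"
  using assms(2,3)
proof (induction b)
  case 0
  then show ?case by simp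
next
  case (Suc b)
  have step: "pattern_precedes x (r ! b) (r ! Suc b)"
    using spec[OF x[unfolded has_pattern_iff_precedes], of "Suc b"] Suc.prems by simp
  show ?case
  proof (cases "a = b")
    case True
    then show ?thesis using step by simp
  next
    case False
    then have "pattern_precedes x (r ! a) (r ! b)" using Suc by simp
    then show ?thesis using step unfolding pattern_precedes_def by auto
  qed
qed

lemma same_pattern_same_precedes:
  assumes r: "r \<in> perms d" and x: "has_pattern x d r" and y: "has_pattern y d r"
    and ij: "i \<le> d" "j \<le> d"
  shows "pattern_precedes x i j = pattern_precedes y i j"
proof -
  have len: "length r = Suc d" using perms_length r .
  have set_r: "set r = {0..d}" using r unfolding perms_def by auto
  obtain a where a: "a < Suc d" "r ! a = i"
    using ij(1) set_r len by (metis atLeastAtMost_iff in_set_conv_nth le0)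
  obtain b where b: "b < Suc d" "r ! b = j"
    using ij(2) set_r len by (metis atLeastAtMost_iff in_set_conv_nth le0)
  consider "a < b" | "a = b" | "b < a" by linarith
  then show ?thesis
  proof cases
    case 1
    then show ?thesis using pattern_precedes_nth[OF x] pattern_precedes_nth[OF y] a b by auto
  next
    case 2
    then show ?thesis using a b unfolding pattern_precedes_def by auto
  next
    case 3
    then have "pattern_precedes x j i" "pattern_precedes y j i"
      using pattern_precedes_nth[OF x] pattern_precedes_nth[OF y] a b by auto
    then show ?thesis unfolding pattern_precedes_def by auto
  qed
qed

lemma has_pattern_transfer:
  assumes r: "r \<in> perms d" and x: "has_pattern x d r"
    and same: "\<And>i j. i \<le> d \<Longrightarrow> j \<le> d \<Longrightarrow> pattern_precedes x i j = pattern_precedes y i j"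
  shows "has_pattern y d r"
  unfolding has_pattern_iff_precedes
proof (intro allI impI)
  fix l assume l: "1 \<le> l \<and> l \<le> d"
  then have "r ! (l - 1) \<le> d" "r ! l \<le> d"
    using perms_nth_le[OF r, of "l - 1"] perms_nth_le[OF r, of l] by linarith+
  moreover have "pattern_precedes x (r ! (l - 1)) (r ! l)"
    using spec[OF x[unfolded has_pattern_iff_precedes], of l] l by simp
  ultimately show "pattern_precedes y (r ! (l - 1)) (r ! l)" using same by simp
qed

section \<open>Ordinal patterns of a lexicographic-like observable\<close>

definition orbit_lex_like :: "((nat \<Rightarrow> nat) \<Rightarrow> real) \<Rightarrow> (nat \<Rightarrow> nat) \<Rightarrow> bool" where
  "orbit_lex_like X s \<longleftrightarrow>
     (\<forall>j n. X ((shift ^^ j) s) \<le> X ((shift ^^ n) s) \<longleftrightarrow> lex_le ((shift ^^ j) s) ((shift ^^ n) s))"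

lemma orbit_lex_like_shift: "orbit_lex_like X s \<Longrightarrow> orbit_lex_like X (shift s)"
  unfolding orbit_lex_like_def shift_pow_shift by blast

lemma pattern_precedes_orbit:
  assumes X: "orbit_lex_like X s" and "i \<le> d" "j \<le> d"
  shows "pattern_precedes (\<lambda>i. X ((shift ^^ (d - i)) s)) i j \<longleftrightarrow> orbit_before s (d - i) (d - j)"
proof -
  have less: "X ((shift ^^ a) s) < X ((shift ^^ b) s) \<longleftrightarrow> lex_less ((shift ^^ a) s) ((shift ^^ b) s)"
    for a b using X not_lex_le_iff unfolding orbit_lex_like_def by (metis not_le)
  have eq: "X ((shift ^^ a) s) = X ((shift ^^ b) s) \<longleftrightarrow> (shift ^^ a) s = (shift ^^ b) s" for a b
    using X lex_less_asym unfolding orbit_lex_like_def lex_le_def by (metis order_antisym order_refl)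
  have "j < i \<longleftrightarrow> d - i < d - j" using assms(2,3) by linarith
  then show ?thesis unfolding pattern_precedes_def orbit_before_def using less eq by metis
qed

lemma pattern_determined_by_shift:
  assumes Xs: "orbit_lex_like X s" and Xt: "orbit_lex_like X t"
    and r: "r \<in> perms d" and r': "r' \<in> perms d"
    and s: "s \<in> seqspace" "shift s \<notin> zero_orbit" "shift s \<in> pattern_set X d r'"
    and t: "t \<in> seqspace" "shift t \<notin> zero_orbit" "shift t \<in> pattern_set X d r'"
    and head: "s 0 = t 0" and s_pattern: "s \<in> pattern_set X d r"
  shows "t \<in> pattern_set X d r"
proof -
  have shift_patterns: "has_pattern (\<lambda>i. X ((shift ^^ (d - i)) (shift s))) d r'"
    "has_pattern (\<lambda>i. X ((shift ^^ (d - i)) (shift t))) d r'"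
    using s(3) t(3) unfolding pattern_set_def by auto
  have tail: "orbit_before (shift s) a b = orbit_before (shift t) a b" if "a \<le> d" "b \<le> d" for a b
  proof -
    have "d - (d - a) = a" "d - (d - b) = b" using that by auto
    then show ?thesis
      using same_pattern_same_precedes[OF r' shift_patterns, of "d - a" "d - b"]
        pattern_precedes_orbit[OF orbit_lex_like_shift[OF Xs], of "d - a" d "d - b"]
        pattern_precedes_orbit[OF orbit_lex_like_shift[OF Xt], of "d - a" d "d - b"]
      by simp
  qed
  have "pattern_precedes (\<lambda>i. X ((shift ^^ (d - i)) s)) i j =
        pattern_precedes (\<lambda>i. X ((shift ^^ (d - i)) t)) i j" if "i \<le> d" "j \<le> d" for i j
    using pattern_precedes_orbit[OF Xs that] pattern_precedes_orbit[OF Xt that]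
      orbit_before_determined[where d = d, OF s(1,2) t(1,2) head tail, of "d - i" "d - j"]
    by simp
  then show ?thesis
    using has_pattern_transfer[OF r] s_pattern t(1) unfolding pattern_set_def by auto
qed

lemma cyl_single: "cyl [a] = {s \<in> seqspace. s 0 = a}"
  unfolding cyl_def by auto

lemma zero_orbit_not_in_cyl: "\<not> zero_orbit \<subseteq> cyl [a]"
proof
  assume in_cyl: "zero_orbit \<subseteq> cyl [a]"
  have "(\<lambda>_. 0::nat) \<in> zero_orbit" "(\<lambda>j. if j = 0 then 1 else 0::nat) \<in> zero_orbit"
    unfolding zero_orbit_def seqspace_def
    by (auto intro!: exI[of _ 0] exI[of _ 1] simp: shift_def)
  then have "0 = a" "1 = a" using in_cyl unfolding cyl_single by auto
  then show False by simp
qed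

lemma mod_partition_cases:
  "P \<in> mod_partition X d \<Longrightarrow> P = zero_orbit \<or> (\<exists>r \<in> perms d. P = pattern_set X d r - zero_orbit)"
  unfolding mod_partition_def ordinal_partition_def by auto

theorem lemma8:
  fixes q :: "nat \<Rightarrow> nat \<Rightarrow> real" and p :: "nat \<Rightarrow> real"
    and M :: "(nat \<Rightarrow> nat) measure" and X :: "(nat \<Rightarrow> nat) \<Rightarrow> real"
    and d a0 :: nat and Pi Pj :: "(nat \<Rightarrow> nat) set"
  assumes "markov_shift q p M"
    and "ergodic_shift M"
    and "X \<in> borel_measurable M"
    and "lexicographic_like M X"
    and "d \<ge> 1"
    and "Pi \<in> mod_partition X d" and "Pj \<in> mod_partition X d"
    and "a0 \<in> {0, 1}" and "Pi \<subseteq> cyl [a0]"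
  shows "Pi \<inter> (shift -` Pj \<inter> seqspace) = cyl [a0] \<inter> (shift -` Pj \<inter> seqspace)
         \<or> emeasure M (Pi \<inter> (shift -` Pj \<inter> seqspace)) = 0"
proof (cases "Pi \<inter> (shift -` Pj \<inter> seqspace) = {}")
  case False
  have X: "orbit_lex_like X s" if "s \<in> seqspace" for s
    using assms(1,4) that unfolding markov_shift_def lexicographic_like_def orbit_lex_like_def by auto
  obtain r where r: "r \<in> perms d" and Pi: "Pi = pattern_set X d r - zero_orbit"
    using mod_partition_cases[OF assms(6)] zero_orbit_not_in_cyl assms(9) by blast
  obtain s where s: "s \<in> Pi" "shift s \<in> Pj" "s \<in> seqspace" using False by auto
  then have "Pj \<noteq> zero_orbit" using Pi shift_in_zero_orbit_iff by auto
  then obtain r' where r': "r' \<in> perms d" and Pj: "Pj = pattern_set X d r' - zero_orbit"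
    using mod_partition_cases[OF assms(7)] by blast
  have "t \<in> Pi" if t: "t \<in> cyl [a0]" "shift t \<in> Pj" "t \<in> seqspace" for t
    using pattern_determined_by_shift[OF X X r r', of s t] s t assms(9) Pi Pj
      shift_in_zero_orbit_iff[OF t(3)] unfolding cyl_single by auto
  then show ?thesis using assms(9) by blast
qed simp

end
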